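(* Assume (A1)–(A3) below. The overidentifying restrictions hold, i.e. there is $\beta_0\in\mathbb R$ with $\mathbb E[(Y_i-\beta_0D_i)(Z_{\ell i}-p_\ell)]=0$ for all $\ell=1,\dots,L$, if and only if $\mathrm{Wald}_1=\mathrm{Wald}_2=\cdots=\mathrm{Wald}_L$. Equivalently, $\mathrm{Wald}_1=\cdots=\mathrm{Wald}_L$ holds if and only if there exists $\beta_0$ such that $\sum_{t\in\mathcal T}\alpha_t(\ell)(\mathrm{LATE}_t-\beta_0)=0$ for every $\ell$.
   Context: Observe i.i.d. $(Y_i,D_i,\mathbf Z_i)$, $D_i\in\{0,1\}$, $\mathbf Z_i=(Z_{1i},\dots,Z_{Li})'\in\{0,1\}^L$, $L\ge2$. Units have potential outcomes $Y_i(0),Y_i(1)$ and a compliance type $D_i(\cdot):\{0,1\}^L\to\{0,1\}$, $D_i=D_i(\mathbf Z_i)$, $Y_i=D_iY_i(1)+(1-D_i)Y_i(0)$; $\mathcal T$ is the set of types, $\theta_t=P(D_i(\cdot)=t)$, $\mathrm{LATE}_t=\mathbb E[Y_i(1)-Y_i(0)\mid D_i(\cdot)=t]$, and $t(z_\ell,z_{-\ell})$ is type $t$'s treatment at the instrument vector with $\ell$-th coordinate $z_\ell$ and others $z_{-\ell}$. $p_\ell=P(Z_{\ell i}=1)$, $\pi_\ell,\rho_\ell$ are the differences in $\mathbb E[D_i\mid Z_{\ell i}=z]$ and $\mathbb E[Y_i\mid Z_{\ell i}=z]$ between $z=1$ and $z=0$, $\mathrm{Wald}_\ell=\rho_\ell/\pi_\ell$,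 $\Sigma_Z=\mathrm{Var}(\mathbf Z_i)$. $q_\ell(z_{-\ell})=P(Z_{-\ell}=z_{-\ell}\mid Z_\ell=1)$, $q^0_\ell(z_{-\ell})=P(Z_{-\ell}=z_{-\ell}\mid Z_\ell=0)$, $\varphi_t(\ell)=\sum_{z_{-\ell}}[t(1,z_{-\ell})q_\ell(z_{-\ell})-t(0,z_{-\ell})q^0_\ell(z_{-\ell})]$, $\alpha_t(\ell)=\theta_t\varphi_t(\ell)/\pi_\ell$. Assumptions: (A1) $(Y_i(0),Y_i(1),D_i(\cdot))$ independent of $\mathbf Z_i$. (A2) $D_i(z)$ nondecreasing in each coordinate for every $i$. (A3) $p_\ell>0$, $\pi_\ell>0$ for all $\ell$; $\Sigma_Z$ positive definite. (The paper phrases the first part as: the Hansen $J$-test of overidentifying restrictions is a joint test of $H_0:\mathrm{Wald}_1=\cdots=\mathrm{Wald}_L$.) *)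

theory Defs
  imports "HOL-Probability.Probability"
begin

text \<open>Units are points of a probability space M (i.i.d. sampling: one generic unit).
  Instruments are indexed by a finite type 'l (L = CARD('l)); an instrument vector is
  z :: 'l \<Rightarrow> bool (True = 1).  A compliance type is t :: ('l \<Rightarrow> bool) \<Rightarrow> bool.
  C \<omega> is the compliance type of the unit, Zv \<omega> its instrument vector.\<close>

definition cmean :: "'a measure \<Rightarrow> ('a \<Rightarrow> real) \<Rightarrow> 'a set \<Rightarrow> real" where
  "cmean M X A = (\<integral>\<omega>. X \<omega> * indicator A \<omega> \<partial>M) / measure M A"

definition Zr :: "('a \<Rightarrow> 'l \<Rightarrow> bool) \<Rightarrow> 'l \<Rightarrow> 'a \<Rightarrow> real" where
  "Zr Zv l \<omega> = of_bool (Zv \<omega> l)"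

definition Dobs :: "('a \<Rightarrow> ('l \<Rightarrow> bool) \<Rightarrow> bool) \<Rightarrow> ('a \<Rightarrow> 'l \<Rightarrow> bool) \<Rightarrow> 'a \<Rightarrow> real" where
  "Dobs C Zv \<omega> = of_bool (C \<omega> (Zv \<omega>))"

definition Yobs :: "('a \<Rightarrow> real) \<Rightarrow> ('a \<Rightarrow> real) \<Rightarrow> ('a \<Rightarrow> ('l \<Rightarrow> bool) \<Rightarrow> bool)
    \<Rightarrow> ('a \<Rightarrow> 'l \<Rightarrow> bool) \<Rightarrow> 'a \<Rightarrow> real" where
  "Yobs Y0 Y1 C Zv \<omega> = (if C \<omega> (Zv \<omega>) then Y1 \<omega> else Y0 \<omega>)"

definition pZ :: "'a measure \<Rightarrow> ('a \<Rightarrow> 'l \<Rightarrow> bool) \<Rightarrow> 'l \<Rightarrow> real" where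
  "pZ M Zv l = measure M {\<omega>\<in>space M. Zv \<omega> l}"

definition zdiff :: "'a measure \<Rightarrow> ('a \<Rightarrow> 'l \<Rightarrow> bool) \<Rightarrow> ('a \<Rightarrow> real) \<Rightarrow> 'l \<Rightarrow> real" where
  "zdiff M Zv X l = cmean M X {\<omega>\<in>space M. Zv \<omega> l} - cmean M X {\<omega>\<in>space M. \<not> Zv \<omega> l}"

definition piZ where "piZ M C Zv l = zdiff M Zv (Dobs C Zv) l"
definition rhoZ where "rhoZ M Y0 Y1 C Zv l = zdiff M Zv (Yobs Y0 Y1 C Zv) l"
definition wald where "wald M Y0 Y1 C Zv l = rhoZ M Y0 Y1 C Zv l / piZ M C Zv l"

definition covZ :: "'a measure \<Rightarrow> ('a \<Rightarrow> 'l \<Rightarrow> bool) \<Rightarrow> 'l \<Rightarrow> 'l \<Rightarrow> real" where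
  "covZ M Zv l k = (\<integral>\<omega>. Zr Zv l \<omega> * Zr Zv k \<omega> \<partial>M) - pZ M Zv l * pZ M Zv k"

definition covZ_posdef :: "'a measure \<Rightarrow> ('a \<Rightarrow> ('l::finite) \<Rightarrow> bool) \<Rightarrow> bool" where
  "covZ_posdef M Zv \<longleftrightarrow>
     (\<forall>v :: 'l \<Rightarrow> real. v \<noteq> (\<lambda>_. 0) \<longrightarrow> (\<Sum>l\<in>UNIV. \<Sum>k\<in>UNIV. v l * v k * covZ M Zv l k) > 0)"

definition theta where "theta M C t = measure M {\<omega>\<in>space M. C \<omega> = t}"

definition late where
  "late M Y0 Y1 C t = cmean M (\<lambda>\<omega>. Y1 \<omega> - Y0 \<omega>) {\<omega>\<in>space M. C \<omega> = t}"

text \<open>q_l(z_{-l}) and q^0_l(z_{-l}); z_{-l} is represented by a full vector w (its l-th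
  coordinate is irrelevant)\<close>
definition q1 :: "'a measure \<Rightarrow> ('a \<Rightarrow> 'l \<Rightarrow> bool) \<Rightarrow> 'l \<Rightarrow> ('l \<Rightarrow> bool) \<Rightarrow> real" where
  "q1 M Zv l w = measure M {\<omega>\<in>space M. (\<forall>k. k \<noteq> l \<longrightarrow> Zv \<omega> k = w k) \<and> Zv \<omega> l}
                 / measure M {\<omega>\<in>space M. Zv \<omega> l}"

definition q0 :: "'a measure \<Rightarrow> ('a \<Rightarrow> 'l \<Rightarrow> bool) \<Rightarrow> 'l \<Rightarrow> ('l \<Rightarrow> bool) \<Rightarrow> real" where
  "q0 M Zv l w = measure M {\<omega>\<in>space M. (\<forall>k. k \<noteq> l \<longrightarrow> Zv \<omega> k = w k) \<and> \<not> Zv \<omega> l}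
                 / measure M {\<omega>\<in>space M. \<not> Zv \<omega> l}"

text \<open>the sum over z_{-l} ranges over vectors w with w l = False (one representative each)\<close>
definition phi :: "'a measure \<Rightarrow> ('a \<Rightarrow> ('l::finite) \<Rightarrow> bool) \<Rightarrow> (('l \<Rightarrow> bool) \<Rightarrow> bool) \<Rightarrow> 'l \<Rightarrow> real" where
  "phi M Zv t l = (\<Sum>w\<in>{w. \<not> w l}.
      of_bool (t (w(l := True))) * q1 M Zv l w - of_bool (t (w(l := False))) * q0 M Zv l w)"

definition alpha where
  "alpha M C Zv t l = theta M C t * phi M Zv t l / piZ M C Zv l"

text \<open>(A1): (Y(0),Y(1),D(.)) independent of Z.  Since D(.) and Z take finitely many
  values, this is independence of the joint law, written out on generating events.\<close>
definition indep_A1 :: "'a measure \<Rightarrow> ('a \<Rightarrow> real) \<Rightarrow> ('a \<Rightarrow> real)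
    \<Rightarrow> ('a \<Rightarrow> ('l \<Rightarrow> bool) \<Rightarrow> bool) \<Rightarrow> ('a \<Rightarrow> 'l \<Rightarrow> bool) \<Rightarrow> bool" where
  "indep_A1 M Y0 Y1 C Zv \<longleftrightarrow>
     (\<forall>A \<in> sets (borel :: (real \<times> real) measure). \<forall>t z.
        measure M {\<omega>\<in>space M. (Y0 \<omega>, Y1 \<omega>) \<in> A \<and> C \<omega> = t \<and> Zv \<omega> = z}
        = measure M {\<omega>\<in>space M. (Y0 \<omega>, Y1 \<omega>) \<in> A \<and> C \<omega> = t}
          * measure M {\<omega>\<in>space M. Zv \<omega> = z})"

end

theory Submission
  imports Defs
begin

(* For a single binary instrument with P(Z_l = 1) = p in (0,1), the covariance of any
   integrable X with Z_l rescales the difference of conditional means: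
   E[X (Z_l - p)] = p (1 - p) (E[X | Z_l = 1] - E[X | Z_l = 0]).
   Hence the l-th moment condition equals p (1 - p) (rho_l - beta pi_l), which vanishes
   exactly when beta = Wald_l.  By independence (A1), expectations of functions of
   (Y(0), Y(1), D(.), Z) split over compliance types t and instrument values z, which gives
   pi_l = sum_t theta_t phi_t(l) and rho_l = sum_t theta_t phi_t(l) LATE_t, because
   Y = Y(0) + D (Y(1) - Y(0)), the Y(0) part is uncorrelated with Z_l, and
   p (1 - p) phi_t(l) = Cov(t(Z), Z_l).  So sum_t alpha_t(l) (LATE_t - beta) equals
   (rho_l - beta pi_l) / pi_l and vanishes exactly when beta = Wald_l as well; a common
   root beta exists iff all Wald ratios agree. *)

lemma distr_density_indicator_scaled:
  fixes T :: "'a \<Rightarrow> 'b"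
  assumes "finite_measure M" and T: "T \<in> M \<rightarrow>\<^sub>M N"
    and S: "S \<in> sets M" and R: "R \<in> sets M" and "0 \<le> c"
    and scaled: "\<And>A. A \<in> sets N \<Longrightarrow> measure M (T -` A \<inter> S) = c * measure M (T -` A \<inter> R)"
  shows "distr (density M (\<lambda>\<omega>. ennreal (indicator S \<omega>))) N T
    = distr (density M (\<lambda>\<omega>. c * indicator R \<omega>)) N T"
proof (rule measure_eqI)
  interpret finite_measure M by fact
  fix A assume "A \<in> sets (distr (density M (\<lambda>\<omega>. ennreal (indicator S \<omega>))) N T)"
  then have A: "A \<in> sets N" by simp
  have pre: "T -` A \<inter> space M \<in> sets M" using measurable_sets[OF T A] .
  have "S \<inter> (T -` A \<inter> space M) = T -` A \<inter> S"
    using sets.sets_into_space[OF S] by blast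
  then have "emeasure (distr (density M (\<lambda>\<omega>. ennreal (indicator S \<omega>))) N T) A
      = emeasure M (T -` A \<inter> S)"
    using S pre T A by (simp add: emeasure_distr emeasure_restricted ennreal_indicator)
  also have "\<dots> = ennreal (c * measure M (T -` A \<inter> R))"
    by (simp add: emeasure_eq_measure scaled[OF A])
  also have "\<dots> = (\<integral>\<^sup>+\<omega>. ennreal c * indicator (T -` A \<inter> R) \<omega> \<partial>M)"
  proof -
    have "T -` A \<inter> R = (T -` A \<inter> space M) \<inter> R"
      using sets.sets_into_space[OF R] by blast
    then have "T -` A \<inter> R \<in> sets M" using pre R by auto
    from nn_integral_cmult_indicator[OF this, of c] show ?thesis
      using \<open>0 \<le> c\<close> by (simp add: emeasure_eq_measure ennreal_mult)
  qed
  also have "\<dots> = (\<integral>\<^sup>+\<omega>. ennreal (c * indicator R \<omega>) * indicator (T -` A \<inter> space M) \<omega> \<partial>M)"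
    using sets.sets_into_space[OF R] \<open>0 \<le> c\<close>
    by (intro nn_integral_cong) (auto split: split_indicator)
  also have "\<dots> = emeasure (distr (density M (\<lambda>\<omega>. c * indicator R \<omega>)) N T) A"
    using R pre T A by (simp add: emeasure_distr emeasure_density)
  finally show "emeasure (distr (density M (\<lambda>\<omega>. ennreal (indicator S \<omega>))) N T) A
      = emeasure (distr (density M (\<lambda>\<omega>. c * indicator R \<omega>)) N T) A" .
qed simp

lemma integral_mult_indicator_scaled:
  fixes T :: "'a \<Rightarrow> 'b" and f :: "'b \<Rightarrow> real"
  assumes "finite_measure M" and T: "T \<in> M \<rightarrow>\<^sub>M N" and f: "f \<in> borel_measurable N"
    and S: "S \<in> sets M" and R: "R \<in> sets M" and "0 \<le> c"
    and "\<And>A. A \<in> sets N \<Longrightarrow> measure M (T -` A \<inter> S) = c * measure M (T -` A \<inter> R)"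
  shows "(\<integral>\<omega>. f (T \<omega>) * indicator S \<omega> \<partial>M) = c * (\<integral>\<omega>. f (T \<omega>) * indicator R \<omega> \<partial>M)"
proof -
  have integral_distr_density:
    "integral\<^sup>L (distr (density M g) N T) f = (\<integral>\<omega>. g \<omega> * f (T \<omega>) \<partial>M)"
    if "g \<in> borel_measurable M" "\<And>\<omega>. 0 \<le> g \<omega>" for g
    using that T f by (simp add: integral_distr integral_density measurable_compose[OF T f])
  from arg_cong[OF distr_density_indicator_scaled[OF assms(1,2,4-)], of "\<lambda>\<nu>. integral\<^sup>L \<nu> f"]
  show ?thesis
    using S R \<open>0 \<le> c\<close> by (simp add: integral_distr_density mult.commute mult.left_commute)
qed

lemma integral_finite_range:
  fixes X :: "'a \<Rightarrow> 'b::finite"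
  assumes "finite_measure M" and X: "X \<in> M \<rightarrow>\<^sub>M count_space UNIV"
  shows "(\<integral>\<omega>. f (X \<omega>) \<partial>M) = (\<Sum>x\<in>UNIV. f x * measure M {\<omega>\<in>space M. X \<omega> = x})"
proof -
  interpret finite_measure M by fact
  have events: "{\<omega>\<in>space M. X \<omega> = x} \<in> sets M" for x
    using X by measurable
  have "(\<integral>\<omega>. f (X \<omega>) \<partial>M) = (\<integral>\<omega>. (\<Sum>x\<in>UNIV. f x * indicator {\<omega>\<in>space M. X \<omega> = x} \<omega>) \<partial>M)"
    by (intro Bochner_Integration.integral_cong) (auto simp: indicator_def)
  also have "\<dots> = (\<Sum>x\<in>UNIV. \<integral>\<omega>. f x * indicator {\<omega>\<in>space M. X \<omega> = x} \<omega> \<partial>M)"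
    by (intro Bochner_Integration.integral_sum integrable_real_mult_indicator events integrable_const)
  also have "\<dots> = (\<Sum>x\<in>UNIV. f x * measure M {\<omega>\<in>space M. X \<omega> = x})"
    using events by simp
  finally show ?thesis .
qed

lemma integral_mult_indicator_eq_cmean:
  assumes "finite_measure M" and "S \<in> sets M"
  shows "(\<integral>\<omega>. X \<omega> * indicator S \<omega> \<partial>M) = measure M S * cmean M X S"
proof (cases "measure M S = 0")
  case True
  then have "S \<in> null_sets M"
    using assms by (simp add: finite_measure.emeasure_eq_measure null_setsI)
  then have "AE \<omega> in M. \<omega> \<notin> S" by (rule AE_not_in)
  then have "AE \<omega> in M. X \<omega> * indicator S \<omega> = 0" by eventually_elim simp
  then show ?thesis using True by (simp add: integral_eq_zero_AE)
qed (simp add: cmean_def)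

lemma cmean_diff_scaled:
  assumes "integrable M X" "integrable M Y" "A \<in> sets M"
  shows "cmean M (\<lambda>\<omega>. X \<omega> - \<beta> * Y \<omega>) A = cmean M X A - \<beta> * cmean M Y A"
  using assms by (simp add: cmean_def left_diff_distrib mult.assoc integrable_real_mult_indicator
      diff_divide_distrib)

lemma integral_mult_centered_indicator:
  assumes "prob_space M" and X: "integrable M X" and E: "E \<in> sets M"
    and "0 < measure M E" "measure M E < 1"
  shows "(\<integral>\<omega>. X \<omega> * (indicator E \<omega> - measure M E) \<partial>M)
    = measure M E * (1 - measure M E) * (cmean M X E - cmean M X (space M - E))"
proof -
  interpret prob_space M by fact
  define p where "p = prob E"
  have E': "space M - E \<in> events" using E by auto
  have "(\<integral>\<omega>. X \<omega> * (indicator E \<omega> - p) \<partial>M)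
      = (\<integral>\<omega>. (1 - p) * (X \<omega> * indicator E \<omega>) - p * (X \<omega> * indicator (space M - E) \<omega>) \<partial>M)"
    by (intro Bochner_Integration.integral_cong refl) (simp split: split_indicator add: algebra_simps)
  also have "\<dots> = (1 - p) * (\<integral>\<omega>. X \<omega> * indicator E \<omega> \<partial>M)
      - p * (\<integral>\<omega>. X \<omega> * indicator (space M - E) \<omega> \<partial>M)"
    using E E' X by (simp add: integrable_real_mult_indicator)
  also have "\<dots> = p * (1 - p) * (cmean M X E - cmean M X (space M - E))"
  proof -
    have "p \<noteq> 0" "1 - p \<noteq> 0" using assms unfolding p_def by auto
    then have "(1 - p) * a - p * b = p * (1 - p) * (a / p - b / (1 - p))" for a b :: real
      by (simp add: field_simps)
    then show ?thesis
      unfolding cmean_def prob_compl[OF E, folded p_def] p_def[symmetric] .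
  qed
  finally show ?thesis unfolding p_def .
qed

lemma sum_upd_True:
  fixes l :: "'l::finite"
  shows "(\<Sum>w | \<not> w l. g (w(l := True))) = (\<Sum>z | z l. g z)"
  by (rule sum.reindex_bij_witness[where i = "\<lambda>z. z(l := False)" and j = "\<lambda>w. w(l := True)"])
    (auto simp: fun_eq_iff)

locale iv_model = prob_space M
  for M :: "'a measure" +
  fixes Y0 Y1 :: "'a \<Rightarrow> real"
    and C :: "'a \<Rightarrow> ('l::finite \<Rightarrow> bool) \<Rightarrow> bool"
    and Zv :: "'a \<Rightarrow> 'l \<Rightarrow> bool"
  assumes integrable_Y0: "integrable M Y0" and integrable_Y1: "integrable M Y1"
    and measurable_C[measurable]: "C \<in> M \<rightarrow>\<^sub>M count_space UNIV"
    and measurable_Zv[measurable]: "Zv \<in> M \<rightarrow>\<^sub>M count_space UNIV"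
    and indep: "indep_A1 M Y0 Y1 C Zv"
begin

lemma events_C: "{\<omega>\<in>space M. P (C \<omega>)} \<in> events"
  by measurable

lemma events_Zv: "{\<omega>\<in>space M. P (Zv \<omega>)} \<in> events"
  by measurable

lemma events_C_Zv: "{\<omega>\<in>space M. P (C \<omega>) (Zv \<omega>)} \<in> events"
  by measurable

lemma integral_cell_factorizes:
  assumes "g \<in> borel_measurable borel"
  shows "(\<integral>\<omega>. g (Y0 \<omega>, Y1 \<omega>) * indicator {\<omega>\<in>space M. C \<omega> = t \<and> Zv \<omega> = z} \<omega> \<partial>M)
    = prob {\<omega>\<in>space M. Zv \<omega> = z} * (\<integral>\<omega>. g (Y0 \<omega>, Y1 \<omega>) * indicator {\<omega>\<in>space M. C \<omega> = t} \<omega> \<partial>M)"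
proof (rule integral_mult_indicator_scaled[where N = borel and T = "\<lambda>\<omega>. (Y0 \<omega>, Y1 \<omega>)"])
  show "(\<lambda>\<omega>. (Y0 \<omega>, Y1 \<omega>)) \<in> M \<rightarrow>\<^sub>M borel"
    using integrable_Y0 integrable_Y1 by (intro borel_measurable_Pair) auto
  show "{\<omega>\<in>space M. C \<omega> = t \<and> Zv \<omega> = z} \<in> events" "{\<omega>\<in>space M. C \<omega> = t} \<in> events"
    using events_C_Zv[of "\<lambda>c w. c = t \<and> w = z"] events_C[of "\<lambda>c. c = t"] by simp_all
  fix A :: "(real \<times> real) set" assume "A \<in> sets borel"
  moreover have "(\<lambda>\<omega>. (Y0 \<omega>, Y1 \<omega>)) -` A \<inter> {\<omega>\<in>space M. C \<omega> = t \<and> Zv \<omega> = z}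
      = {\<omega>\<in>space M. (Y0 \<omega>, Y1 \<omega>) \<in> A \<and> C \<omega> = t \<and> Zv \<omega> = z}"
    and "(\<lambda>\<omega>. (Y0 \<omega>, Y1 \<omega>)) -` A \<inter> {\<omega>\<in>space M. C \<omega> = t}
      = {\<omega>\<in>space M. (Y0 \<omega>, Y1 \<omega>) \<in> A \<and> C \<omega> = t}"
    by auto
  ultimately show "prob ((\<lambda>\<omega>. (Y0 \<omega>, Y1 \<omega>)) -` A \<inter> {\<omega>\<in>space M. C \<omega> = t \<and> Zv \<omega> = z})
      = prob {\<omega>\<in>space M. Zv \<omega> = z} * prob ((\<lambda>\<omega>. (Y0 \<omega>, Y1 \<omega>)) -` A \<inter> {\<omega>\<in>space M. C \<omega> = t})"
    using indep unfolding indep_A1_def by simp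
qed (simp_all add: finite_measure_axioms assms)

lemma integral_by_types_instruments:
  assumes "\<And>t z. F t z \<in> borel_measurable borel"
    and "\<And>t z. integrable M (\<lambda>\<omega>. F t z (Y0 \<omega>, Y1 \<omega>))"
  shows "(\<integral>\<omega>. F (C \<omega>) (Zv \<omega>) (Y0 \<omega>, Y1 \<omega>) \<partial>M)
    = (\<Sum>t\<in>UNIV. \<Sum>z\<in>UNIV. prob {\<omega>\<in>space M. Zv \<omega> = z}
         * (\<integral>\<omega>. F t z (Y0 \<omega>, Y1 \<omega>) * indicator {\<omega>\<in>space M. C \<omega> = t} \<omega> \<partial>M))"
proof -
  let ?cell = "\<lambda>t z. {\<omega>\<in>space M. C \<omega> = t \<and> Zv \<omega> = z}"
  have expand: "F (C \<omega>) (Zv \<omega>) (Y0 \<omega>, Y1 \<omega>)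
      = (\<Sum>t\<in>UNIV. \<Sum>z\<in>UNIV. F t z (Y0 \<omega>, Y1 \<omega>) * indicator (?cell t z) \<omega>)"
    if "\<omega> \<in> space M" for \<omega>
  proof -
    have "F t z (Y0 \<omega>, Y1 \<omega>) * indicator (?cell t z) \<omega>
        = (if z = Zv \<omega> then if t = C \<omega> then F t z (Y0 \<omega>, Y1 \<omega>) else 0 else 0)" for t z
      using that by (auto simp: indicator_def)
    then show ?thesis by (simp only: sum.delta finite UNIV_I if_True)
  qed
  have integrable_cell: "integrable M (\<lambda>\<omega>. F t z (Y0 \<omega>, Y1 \<omega>) * indicator (?cell t z) \<omega>)" for t z
    using integrable_real_mult_indicator[OF _ assms(2)] events_C_Zv[of "\<lambda>c w. c = t \<and> w = z"]
    by simp
  have "(\<integral>\<omega>. F (C \<omega>) (Zv \<omega>) (Y0 \<omega>, Y1 \<omega>) \<partial>M)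
      = (\<integral>\<omega>. (\<Sum>t\<in>UNIV. \<Sum>z\<in>UNIV. F t z (Y0 \<omega>, Y1 \<omega>) * indicator (?cell t z) \<omega>) \<partial>M)"
    by (intro Bochner_Integration.integral_cong refl expand)
  also have "\<dots> = (\<Sum>t\<in>UNIV. \<Sum>z\<in>UNIV. \<integral>\<omega>. F t z (Y0 \<omega>, Y1 \<omega>) * indicator (?cell t z) \<omega> \<partial>M)"
    using integrable_cell
    by (simp only: Bochner_Integration.integral_sum Bochner_Integration.integrable_sum)
  finally show ?thesis
    by (simp add: integral_cell_factorizes assms(1))
qed

lemma integrable_Dobs: "integrable M (Dobs C Zv)"
proof -
  have "integrable M (\<lambda>\<omega>. (1::real) * indicator {\<omega>\<in>space M. C \<omega> (Zv \<omega>)} \<omega>)"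
    by (rule integrable_real_mult_indicator[OF events_C_Zv[of "\<lambda>c w. c w"]]) simp
  then show ?thesis
    by (rule Bochner_Integration.integrable_cong[THEN iffD1, rotated 2]) (auto simp: Dobs_def)
qed

lemma integrable_Yobs: "integrable M (Yobs Y0 Y1 C Zv)"
proof -
  have "integrable M (\<lambda>\<omega>. Y0 \<omega> + (Y1 \<omega> - Y0 \<omega>) * indicator {\<omega>\<in>space M. C \<omega> (Zv \<omega>)} \<omega>)"
    using events_C_Zv[of "\<lambda>c w. c w"] integrable_Y0 integrable_Y1
    by (intro Bochner_Integration.integrable_add integrable_real_mult_indicator
        Bochner_Integration.integrable_diff)
  then show ?thesis
    by (rule Bochner_Integration.integrable_cong[THEN iffD1, rotated 2]) (auto simp: Yobs_def)
qed

lemma integrable_Zr: "integrable M (Zr Zv l)"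
proof -
  have "integrable M (\<lambda>\<omega>. (1::real) * indicator {\<omega>\<in>space M. Zv \<omega> l} \<omega>)"
    by (rule integrable_real_mult_indicator[OF events_Zv[of "\<lambda>z. z l"]]) simp
  then show ?thesis
    by (rule Bochner_Integration.integrable_cong[THEN iffD1, rotated 2]) (auto simp: Zr_def)
qed

lemma integral_Zr: "(\<integral>\<omega>. Zr Zv l \<omega> \<partial>M) = pZ M Zv l"
proof -
  have "(\<integral>\<omega>. Zr Zv l \<omega> \<partial>M) = (\<integral>\<omega>. indicator {\<omega>\<in>space M. Zv \<omega> l} \<omega> \<partial>M)"
    by (intro Bochner_Integration.integral_cong) (auto simp: Zr_def)
  also have "\<dots> = pZ M Zv l"
    using events_Zv[of "\<lambda>z. z l"] by (simp add: pZ_def)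
  finally show ?thesis .
qed

lemma prob_not_Zv: "prob {\<omega>\<in>space M. \<not> Zv \<omega> l} = 1 - pZ M Zv l"
proof -
  have "{\<omega>\<in>space M. \<not> Zv \<omega> l} = space M - {\<omega>\<in>space M. Zv \<omega> l}" by auto
  also have "prob \<dots> = 1 - pZ M Zv l"
    unfolding pZ_def by (rule prob_compl[OF events_Zv[of "\<lambda>z. z l"]])
  finally show ?thesis .
qed

lemma pZ_bounds:
  assumes "covZ_posdef M Zv"
  shows "0 < pZ M Zv l" "pZ M Zv l < 1"
proof -
  have "(\<Sum>a\<in>UNIV. \<Sum>b\<in>UNIV. of_bool (a = l) * of_bool (b = l) * covZ M Zv a b) > 0"
    using assms unfolding covZ_posdef_def by (metis (mono_tags) of_bool_eq(2) zero_neq_one)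
  then have "covZ M Zv l l > 0"
    by (simp add: mult.assoc flip: sum_distrib_left)
  moreover have "Zr Zv l \<omega> * Zr Zv l \<omega> = Zr Zv l \<omega>" for \<omega>
    by (simp add: Zr_def)
  ultimately have "pZ M Zv l * (1 - pZ M Zv l) > 0"
    by (simp add: covZ_def integral_Zr algebra_simps)
  then show "0 < pZ M Zv l" "pZ M Zv l < 1"
    using measure_nonneg[of M] by (auto simp: pZ_def zero_less_mult_iff)
qed

lemma integral_mult_centered_Zr:
  assumes X: "integrable M X" and p: "0 < pZ M Zv l" "pZ M Zv l < 1"
  shows "(\<integral>\<omega>. X \<omega> * (Zr Zv l \<omega> - pZ M Zv l) \<partial>M) = pZ M Zv l * (1 - pZ M Zv l) * zdiff M Zv X l"
proof -
  define E where "E = {\<omega>\<in>space M. Zv \<omega> l}"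
  have E: "E \<in> events" unfolding E_def by (rule events_Zv)
  have "(\<integral>\<omega>. X \<omega> * (Zr Zv l \<omega> - pZ M Zv l) \<partial>M) = (\<integral>\<omega>. X \<omega> * (indicator E \<omega> - prob E) \<partial>M)"
    by (intro Bochner_Integration.integral_cong refl) (simp add: E_def Zr_def pZ_def indicator_def)
  also have "space M - E = {\<omega>\<in>space M. \<not> Zv \<omega> l}" by (auto simp: E_def)
  then have "(\<integral>\<omega>. X \<omega> * (indicator E \<omega> - prob E) \<partial>M) = pZ M Zv l * (1 - pZ M Zv l) * zdiff M Zv X l"
    using integral_mult_centered_indicator[OF prob_space_axioms X E] p
    by (simp add: zdiff_def E_def pZ_def)
  finally show ?thesis .
qed

lemma sum_centered_Zv: "(\<Sum>z\<in>UNIV. (of_bool (z l) - pZ M Zv l) * prob {\<omega>\<in>space M. Zv \<omega> = z}) = 0"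
proof -
  have "(\<Sum>z\<in>UNIV. (of_bool (z l) - pZ M Zv l) * prob {\<omega>\<in>space M. Zv \<omega> = z})
      = (\<integral>\<omega>. Zr Zv l \<omega> - pZ M Zv l \<partial>M)"
    using integral_finite_range[OF finite_measure_axioms measurable_Zv, of "\<lambda>z. of_bool (z l) - pZ M Zv l"]
    by (simp add: Zr_def)
  also have "\<dots> = 0"
    using integral_Zr[of l] integrable_Zr[of l] by (simp add: prob_space)
  finally show ?thesis .
qed

lemma variance_mult_phi:
  assumes p: "0 < pZ M Zv l" "pZ M Zv l < 1"
  shows "pZ M Zv l * (1 - pZ M Zv l) * phi M Zv t l
    = (\<Sum>z\<in>UNIV. of_bool (t z) * (of_bool (z l) - pZ M Zv l) * prob {\<omega>\<in>space M. Zv \<omega> = z})"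
proof -
  define P where "P z = prob {\<omega>\<in>space M. Zv \<omega> = z}" for z
  define h where "h z = of_bool (t z) * P z" for z
  have q1: "q1 M Zv l w = P (w(l := True)) / pZ M Zv l" for w
  proof -
    have "{\<omega>\<in>space M. (\<forall>k. k \<noteq> l \<longrightarrow> Zv \<omega> k = w k) \<and> Zv \<omega> l} = {\<omega>\<in>space M. Zv \<omega> = w(l := True)}"
      by (auto simp: fun_eq_iff)
    then show ?thesis by (simp add: q1_def pZ_def P_def)
  qed
  have q0: "q0 M Zv l w = P w / (1 - pZ M Zv l)" if "\<not> w l" for w
  proof -
    have "{\<omega>\<in>space M. (\<forall>k. k \<noteq> l \<longrightarrow> Zv \<omega> k = w k) \<and> \<not> Zv \<omega> l} = {\<omega>\<in>space M. Zv \<omega> = w}"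
      using that by (auto simp: fun_eq_iff)
    then show ?thesis by (simp add: q0_def prob_not_Zv P_def)
  qed
  have "phi M Zv t l = (\<Sum>w | \<not> w l. h (w(l := True)) / pZ M Zv l) - (\<Sum>w | \<not> w l. h w / (1 - pZ M Zv l))"
    unfolding phi_def sum_subtractf[symmetric]
    by (intro sum.cong refl) (simp add: q1 q0 h_def fun_upd_idem)
  also have "\<dots> = (\<Sum>z | z l. h z / pZ M Zv l) - (\<Sum>z | \<not> z l. h z / (1 - pZ M Zv l))"
    by (simp only: sum_upd_True[where g = "\<lambda>z. h z / pZ M Zv l"])
  also have "\<dots> = (\<Sum>z\<in>UNIV. (if z l then h z / pZ M Zv l else 0) - (if z l then 0 else h z / (1 - pZ M Zv l)))"
    by (simp add: sum_subtractf sum.If_cases Collect_neg_eq)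
  also have "\<dots> = (\<Sum>z\<in>UNIV. h z * (of_bool (z l) - pZ M Zv l)) / (pZ M Zv l * (1 - pZ M Zv l))"
    unfolding sum_divide_distrib using p by (intro sum.cong refl) (auto simp: field_simps)
  finally show ?thesis using p by (simp add: h_def P_def mult_ac)
qed

lemma integral_Dobs_mult_centered_Zr:
  assumes p: "0 < pZ M Zv l" "pZ M Zv l < 1"
  shows "(\<integral>\<omega>. Dobs C Zv \<omega> * (Zr Zv l \<omega> - pZ M Zv l) \<partial>M)
    = pZ M Zv l * (1 - pZ M Zv l) * (\<Sum>t\<in>UNIV. theta M C t * phi M Zv t l)"
proof -
  let ?F = "\<lambda>t z (y :: real \<times> real). of_bool (t z) * (of_bool (z l) - pZ M Zv l)"
  have "(\<integral>\<omega>. Dobs C Zv \<omega> * (Zr Zv l \<omega> - pZ M Zv l) \<partial>M) = (\<integral>\<omega>. ?F (C \<omega>) (Zv \<omega>) (Y0 \<omega>, Y1 \<omega>) \<partial>M)"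
    by (simp add: Dobs_def Zr_def)
  also have "\<dots> = (\<Sum>t\<in>UNIV. \<Sum>z\<in>UNIV. prob {\<omega>\<in>space M. Zv \<omega> = z}
      * (\<integral>\<omega>. ?F t z (Y0 \<omega>, Y1 \<omega>) * indicator {\<omega>\<in>space M. C \<omega> = t} \<omega> \<partial>M))"
    by (rule integral_by_types_instruments) simp_all
  also have "\<dots> = (\<Sum>t\<in>UNIV. theta M C t
      * (\<Sum>z\<in>UNIV. of_bool (t z) * (of_bool (z l) - pZ M Zv l) * prob {\<omega>\<in>space M. Zv \<omega> = z}))"
    using events_C by (simp add: theta_def sum_distrib_left mult_ac)
  also have "\<dots> = (\<Sum>t\<in>UNIV. theta M C t * (pZ M Zv l * (1 - pZ M Zv l) * phi M Zv t l))"
    by (simp only: variance_mult_phi[OF p])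
  also have "\<dots> = pZ M Zv l * (1 - pZ M Zv l) * (\<Sum>t\<in>UNIV. theta M C t * phi M Zv t l)"
    by (simp add: sum_distrib_left mult_ac)
  finally show ?thesis .
qed

lemma integral_outcome_mult_indicator_type:
  "(\<integral>\<omega>. (Y0 \<omega> + c * (Y1 \<omega> - Y0 \<omega>)) * indicator {\<omega>\<in>space M. C \<omega> = t} \<omega> \<partial>M)
    = (\<integral>\<omega>. Y0 \<omega> * indicator {\<omega>\<in>space M. C \<omega> = t} \<omega> \<partial>M) + c * (theta M C t * late M Y0 Y1 C t)"
proof -
  let ?S = "{\<omega>\<in>space M. C \<omega> = t}"
  have S: "?S \<in> events" by (rule events_C)
  have "(\<integral>\<omega>. (Y1 \<omega> - Y0 \<omega>) * indicator ?S \<omega> \<partial>M) = theta M C t * late M Y0 Y1 C t"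
    unfolding theta_def late_def by (rule integral_mult_indicator_eq_cmean[OF finite_measure_axioms S])
  moreover have "(\<lambda>\<omega>. (Y0 \<omega> + c * (Y1 \<omega> - Y0 \<omega>)) * indicator ?S \<omega>)
      = (\<lambda>\<omega>. Y0 \<omega> * indicator ?S \<omega> + c * ((Y1 \<omega> - Y0 \<omega>) * indicator ?S \<omega>))"
    by (simp add: fun_eq_iff algebra_simps)
  ultimately show ?thesis
    using S integrable_Y0 integrable_Y1 by (simp add: integrable_real_mult_indicator)
qed

lemma integral_Yobs_mult_centered_Zr:
  assumes p: "0 < pZ M Zv l" "pZ M Zv l < 1"
  shows "(\<integral>\<omega>. Yobs Y0 Y1 C Zv \<omega> * (Zr Zv l \<omega> - pZ M Zv l) \<partial>M)
    = pZ M Zv l * (1 - pZ M Zv l) * (\<Sum>t\<in>UNIV. theta M C t * phi M Zv t l * late M Y0 Y1 C t)"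
proof -
  define P where "P z = prob {\<omega>\<in>space M. Zv \<omega> = z}" for z
  define a where "a t = (\<integral>\<omega>. Y0 \<omega> * indicator {\<omega>\<in>space M. C \<omega> = t} \<omega> \<partial>M)" for t
  let ?F = "\<lambda>t z (y :: real \<times> real). (fst y + of_bool (t z) * (snd y - fst y)) * (of_bool (z l) - pZ M Zv l)"
  have "(\<integral>\<omega>. Yobs Y0 Y1 C Zv \<omega> * (Zr Zv l \<omega> - pZ M Zv l) \<partial>M) = (\<integral>\<omega>. ?F (C \<omega>) (Zv \<omega>) (Y0 \<omega>, Y1 \<omega>) \<partial>M)"
    by (intro Bochner_Integration.integral_cong refl) (simp add: Yobs_def Zr_def)
  also have "\<dots> = (\<Sum>t\<in>UNIV. \<Sum>z\<in>UNIV. P z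
      * (\<integral>\<omega>. ?F t z (Y0 \<omega>, Y1 \<omega>) * indicator {\<omega>\<in>space M. C \<omega> = t} \<omega> \<partial>M))"
    unfolding P_def
  proof (rule integral_by_types_instruments)
    show "?F t z \<in> borel_measurable borel" for t z
      by (intro borel_measurable_continuous_onI continuous_intros)
    show "integrable M (\<lambda>\<omega>. ?F t z (Y0 \<omega>, Y1 \<omega>))" for t z
      using integrable_Y0 integrable_Y1 by simp
  qed
  also have "\<dots> = (\<Sum>t\<in>UNIV. \<Sum>z\<in>UNIV. P z * ((a t + of_bool (t z) * (theta M C t * late M Y0 Y1 C t))
      * (of_bool (z l) - pZ M Zv l)))"
  proof -
    have "(\<lambda>\<omega>. ?F t z (Y0 \<omega>, Y1 \<omega>) * indicator {\<omega>\<in>space M. C \<omega> = t} \<omega>)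
        = (\<lambda>\<omega>. (of_bool (z l) - pZ M Zv l)
            * ((Y0 \<omega> + of_bool (t z) * (Y1 \<omega> - Y0 \<omega>)) * indicator {\<omega>\<in>space M. C \<omega> = t} \<omega>))" for t z
      by (simp add: fun_eq_iff mult_ac)
    then show ?thesis
      by (simp add: integral_outcome_mult_indicator_type a_def mult.commute[of _ "of_bool (_ l) - _"])
  qed
  also have "\<dots> = (\<Sum>t\<in>UNIV. a t * (\<Sum>z\<in>UNIV. (of_bool (z l) - pZ M Zv l) * P z)
      + theta M C t * late M Y0 Y1 C t * (\<Sum>z\<in>UNIV. of_bool (t z) * (of_bool (z l) - pZ M Zv l) * P z))"
  proof -
    have "P z * ((a t + of_bool (t z) * (theta M C t * late M Y0 Y1 C t)) * (of_bool (z l) - pZ M Zv l))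
        = a t * ((of_bool (z l) - pZ M Zv l) * P z)
          + theta M C t * late M Y0 Y1 C t * (of_bool (t z) * (of_bool (z l) - pZ M Zv l) * P z)" for t z
      by (simp add: algebra_simps)
    then show ?thesis by (simp only: sum.distrib flip: sum_distrib_left)
  qed
  also have "\<dots> = pZ M Zv l * (1 - pZ M Zv l) * (\<Sum>t\<in>UNIV. theta M C t * phi M Zv t l * late M Y0 Y1 C t)"
    unfolding P_def sum_centered_Zv variance_mult_phi[OF p, symmetric]
    by (simp add: sum_distrib_left mult_ac)
  finally show ?thesis .
qed

lemma piZ_eq:
  assumes p: "0 < pZ M Zv l" "pZ M Zv l < 1"
  shows "piZ M C Zv l = (\<Sum>t\<in>UNIV. theta M C t * phi M Zv t l)"
  using integral_mult_centered_Zr[OF integrable_Dobs p] integral_Dobs_mult_centered_Zr[OF p] p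
  by (simp add: piZ_def)

lemma rhoZ_eq:
  assumes p: "0 < pZ M Zv l" "pZ M Zv l < 1"
  shows "rhoZ M Y0 Y1 C Zv l = (\<Sum>t\<in>UNIV. theta M C t * phi M Zv t l * late M Y0 Y1 C t)"
  using integral_mult_centered_Zr[OF integrable_Yobs p] integral_Yobs_mult_centered_Zr[OF p] p
  by (simp add: rhoZ_def)

lemma moment_condition_eq:
  assumes p: "0 < pZ M Zv l" "pZ M Zv l < 1"
  shows "(\<integral>\<omega>. (Yobs Y0 Y1 C Zv \<omega> - \<beta> * Dobs C Zv \<omega>) * (Zr Zv l \<omega> - pZ M Zv l) \<partial>M)
    = pZ M Zv l * (1 - pZ M Zv l) * (rhoZ M Y0 Y1 C Zv l - \<beta> * piZ M C Zv l)"
proof -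
  have "integrable M (\<lambda>\<omega>. Yobs Y0 Y1 C Zv \<omega> - \<beta> * Dobs C Zv \<omega>)"
    using integrable_Yobs integrable_Dobs by simp
  from integral_mult_centered_Zr[OF this p] show ?thesis
    using cmean_diff_scaled[OF integrable_Yobs integrable_Dobs events_Zv[of "\<lambda>z. z l"], where \<beta> = \<beta>]
      cmean_diff_scaled[OF integrable_Yobs integrable_Dobs events_Zv[of "\<lambda>z. \<not> z l"], where \<beta> = \<beta>]
    by (simp add: zdiff_def rhoZ_def piZ_def algebra_simps)
qed

lemma sum_alpha_late_eq:
  assumes p: "0 < pZ M Zv l" "pZ M Zv l < 1"
  shows "(\<Sum>t\<in>UNIV. alpha M C Zv t l * (late M Y0 Y1 C t - \<beta>))
    = (rhoZ M Y0 Y1 C Zv l - \<beta> * piZ M C Zv l) / piZ M C Zv l"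
  unfolding alpha_def rhoZ_eq[OF p] piZ_eq[OF p]
  by (simp add: algebra_simps sum_subtractf sum_distrib_left flip: sum_divide_distrib)

end

theorem proposition6:
  fixes M :: "'a measure"
    and Y0 Y1 :: "'a \<Rightarrow> real"
    and C :: "'a \<Rightarrow> ('l::finite \<Rightarrow> bool) \<Rightarrow> bool"
    and Zv :: "'a \<Rightarrow> 'l \<Rightarrow> bool"
  assumes "prob_space M"
    and L2: "CARD('l) \<ge> 2"
    and Y0: "integrable M Y0" and Y1: "integrable M Y1"
    and Cmeas: "C \<in> measurable M (count_space UNIV)"
    and Zmeas: "Zv \<in> measurable M (count_space UNIV)"
    and A1: "indep_A1 M Y0 Y1 C Zv"
    and A2: "\<forall>\<omega>\<in>space M. mono (C \<omega>)"
    and A3p: "\<forall>l. pZ M Zv l > 0"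
    and A3pi: "\<forall>l. piZ M C Zv l > 0"
    and A3S: "covZ_posdef M Zv"
  shows "((\<exists>\<beta>0::real. \<forall>l. (\<integral>\<omega>. (Yobs Y0 Y1 C Zv \<omega> - \<beta>0 * Dobs C Zv \<omega>)
                                    * (Zr Zv l \<omega> - pZ M Zv l) \<partial>M) = 0)
           \<longleftrightarrow> (\<forall>l k. wald M Y0 Y1 C Zv l = wald M Y0 Y1 C Zv k))
       \<and> ((\<forall>l k. wald M Y0 Y1 C Zv l = wald M Y0 Y1 C Zv k)
           \<longleftrightarrow> (\<exists>\<beta>0::real. \<forall>l. (\<Sum>t\<in>UNIV. alpha M C Zv t l * (late M Y0 Y1 C t - \<beta>0)) = 0))"
proof -
  interpret iv_model M Y0 Y1 C Zv
    using assms by (simp add: iv_model_def iv_model_axioms_def)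
  have p: "0 < pZ M Zv l" "pZ M Zv l < 1" for l
    using pZ_bounds[OF A3S] by auto
  have pi: "piZ M C Zv l \<noteq> 0" for l
    using A3pi by (metis less_irrefl)
  have root: "rhoZ M Y0 Y1 C Zv l - \<beta> * piZ M C Zv l = 0 \<longleftrightarrow> \<beta> = wald M Y0 Y1 C Zv l" for \<beta> l
    using pi[of l] by (auto simp: wald_def field_simps)
  have moment_iff: "(\<integral>\<omega>. (Yobs Y0 Y1 C Zv \<omega> - \<beta> * Dobs C Zv \<omega>) * (Zr Zv l \<omega> - pZ M Zv l) \<partial>M) = 0
      \<longleftrightarrow> \<beta> = wald M Y0 Y1 C Zv l" for \<beta> l
    using p[of l] by (simp add: moment_condition_eq root[symmetric])
  have alpha_iff: "(\<Sum>t\<in>UNIV. alpha M C Zv t l * (late M Y0 Y1 C t - \<beta>)) = 0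
      \<longleftrightarrow> \<beta> = wald M Y0 Y1 C Zv l" for \<beta> l
    using p[of l] pi[of l] by (simp add: sum_alpha_late_eq root[symmetric])
  show ?thesis
    unfolding moment_iff alpha_iff by metis
qed

end
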